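(* Let $A$ and $B$ be complex Hilbert spaces and $n\geq 2$. Let $\vec{\alpha}=(\alpha_1,\ldots,\alpha_n)\in\mathcal{A}_n$. Then for all bounded operators $M_1,\ldots,M_n:A\rightarrow B$ and all positive semidefinite trace class operators $\rho$ on $A$, \[ \left(\sum_{i=1}^n M_i\right)\rho\left(\sum_{i=1}^n M_i\right)^\dagger \leq \sum_{i=1}^n \alpha_i M_i\rho M_i^\dagger . \] Conversely, let $\vec{\alpha}\in\mathbb{R}^n$ and let $(P_1,\ldots,P_n)$ be a projective measurement on $A$ (projections $P_i=P_i^\dagger=P_i^2$ with $\sum_{i=1}^n P_i=\mathbb{1}_A$) with $P_i\neq 0$ for all $i$. If $\left(\sum_i P_i\right)\rho\left(\sum_i P_i\right)^\dagger=\rho \leq \sum_{i=1}^n \alpha_i P_i\rho P_i$ holds for all positive semidefinite trace class operators $\rho$ on $A$, then $\vec{\alpha}\in\mathcal{A}_n$.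
   Context: $\mathcal{A}_n := \{\vec{\alpha}\in\mathbb{R}^n : \operatorname{diag}(\vec{\alpha}) \geq J\}$, where $\operatorname{diag}(\vec{\alpha})=\sum_{i=1}^n\alpha_i|i\rangle\langle i|$ is the $n\times n$ diagonal matrix with entries $\alpha_i$, $J=\sum_{i,j=1}^n|i\rangle\langle j|$ is the $n\times n$ all-ones matrix, and $\geq$ denotes the Löwner (positive semidefinite) order. All operator inequalities are in the Löwner order. *)

theory Defs
  imports "HOL-Analysis.Analysis"
begin

class scaleC = scaleR +
  fixes scaleC :: "complex \<Rightarrow> 'a \<Rightarrow> 'a"  (infixr \<open>*\<^sub>C\<close> 75)
  assumes scaleR_scaleC: "scaleR r = scaleC (complex_of_real r)"

class complex_vector = scaleC + ab_group_add +
  assumes scaleC_add_right: "a *\<^sub>C (x + y) = a *\<^sub>C x + a *\<^sub>C y"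
    and scaleC_add_left: "(a + b) *\<^sub>C x = a *\<^sub>C x + b *\<^sub>C x"
    and scaleC_scaleC: "a *\<^sub>C (b *\<^sub>C x) = (a * b) *\<^sub>C x"
    and scaleC_one: "1 *\<^sub>C x = x"

text \<open>Complex inner product space: inner product conjugate-linear in the first
  argument, linear in the second (physics convention); the norm is induced by it.\<close>
class complex_inner = complex_vector + real_normed_vector +
  fixes cinner :: "'a \<Rightarrow> 'a \<Rightarrow> complex"
  assumes cinner_commute: "cinner x y = cnj (cinner y x)"
    and cinner_add_left: "cinner (x + y) z = cinner x z + cinner y z"
    and cinner_scaleC_left: "cinner (r *\<^sub>C x) y = cnj r * cinner x y"
    and cinner_self_real_nonneg: "Im (cinner x x) = 0 \<and> Re (cinner x x) \<ge> 0"
    and cinner_eq_zero_iff: "cinner x x = 0 \<longleftrightarrow> x = 0"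
    and norm_eq_sqrt_cinner: "norm x = sqrt (Re (cinner x x))"

class chilbert_space = complex_inner + complete_space

definition clinear :: "('a::complex_vector \<Rightarrow> 'b::complex_vector) \<Rightarrow> bool" where
  "clinear f \<longleftrightarrow> (\<forall>x y. f (x + y) = f x + f y) \<and> (\<forall>c x. f (c *\<^sub>C x) = c *\<^sub>C f x)"

definition bounded_clinear :: "('a::complex_inner \<Rightarrow> 'b::complex_inner) \<Rightarrow> bool" where
  "bounded_clinear f \<longleftrightarrow> clinear f \<and> (\<exists>K. \<forall>x. norm (f x) \<le> norm x * K)"

text \<open>Adjoint: the (unique, for bounded operators on Hilbert spaces) operator with
  \<open>\<langle>M x, y\<rangle> = \<langle>x, M\<^sup>\<dagger> y\<rangle>\<close>.\<close>
definition adj :: "('a::complex_inner \<Rightarrow> 'b::complex_inner) \<Rightarrow> ('b \<Rightarrow> 'a)" where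
  "adj M = (SOME N. \<forall>x y. cinner (M x) y = cinner x (N y))"

definition pos_op :: "('a::complex_inner \<Rightarrow> 'a) \<Rightarrow> bool" where
  "pos_op T \<longleftrightarrow> (\<forall>x. Im (cinner x (T x)) = 0 \<and> Re (cinner x (T x)) \<ge> 0)"

definition loewner_le :: "('a::complex_inner \<Rightarrow> 'a) \<Rightarrow> ('a \<Rightarrow> 'a) \<Rightarrow> bool" where
  "loewner_le X Y \<longleftrightarrow> pos_op (\<lambda>x. Y x - X x)"

definition is_onb :: "'a::complex_inner set \<Rightarrow> bool" where
  "is_onb E \<longleftrightarrow> (\<forall>e\<in>E. cinner e e = 1) \<and> (\<forall>e\<in>E. \<forall>f\<in>E. e \<noteq> f \<longrightarrow> cinner e f = 0)
     \<and> (\<forall>x. (\<forall>e\<in>E. cinner e x = 0) \<longrightarrow> x = 0)"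

text \<open>Positive semidefinite trace-class operator: bounded, positive, and with finite
  trace \<open>\<Sum>\<^sub>e \<langle>e, \<rho> e\<rangle>\<close> over an orthonormal basis (for positive operators this is
  the standard trace-class condition, \<open>|\<rho>| = \<rho>\<close>).\<close>
definition pos_trace_class :: "('a::chilbert_space \<Rightarrow> 'a) \<Rightarrow> bool" where
  "pos_trace_class \<rho> \<longleftrightarrow> bounded_clinear \<rho> \<and> pos_op \<rho> \<and>
     (\<exists>E. is_onb E \<and> (\<lambda>e. Re (cinner e (\<rho> e))) summable_on E)"

definition sandwich :: "('a::complex_inner \<Rightarrow> 'b::complex_inner) \<Rightarrow> ('a \<Rightarrow> 'a) \<Rightarrow> 'b \<Rightarrow> 'b" where
  "sandwich M \<rho> = M \<circ> \<rho> \<circ> adj M"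

definition proj_measurement :: "nat \<Rightarrow> (nat \<Rightarrow> 'a::chilbert_space \<Rightarrow> 'a) \<Rightarrow> bool" where
  "proj_measurement n P \<longleftrightarrow>
     (\<forall>i\<in>{1..n}. bounded_clinear (P i) \<and> adj (P i) = P i \<and> P i \<circ> P i = P i)
     \<and> (\<lambda>x. \<Sum>i=1..n. P i x) = id"

definition psd_mat :: "nat \<Rightarrow> (nat \<Rightarrow> nat \<Rightarrow> complex) \<Rightarrow> bool" where
  "psd_mat n M \<longleftrightarrow> (\<forall>x :: nat \<Rightarrow> complex.
      Im (\<Sum>i=1..n. \<Sum>j=1..n. cnj (x i) * M i j * x j) = 0 \<and>
      Re (\<Sum>i=1..n. \<Sum>j=1..n. cnj (x i) * M i j * x j) \<ge> 0)"

definition diag_mat :: "(nat \<Rightarrow> real) \<Rightarrow> nat \<Rightarrow> nat \<Rightarrow> complex" where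
  "diag_mat \<alpha> i j = (if i = j then complex_of_real (\<alpha> i) else 0)"

definition ones_mat :: "nat \<Rightarrow> nat \<Rightarrow> complex" where
  "ones_mat i j = 1"

text \<open>\<open>\<alpha> \<in> \<A>\<^sub>n\<close> iff \<open>diag(\<alpha>) \<ge> J\<close>; only \<open>\<alpha> 1, \<dots>, \<alpha> n\<close> matter.\<close>
definition A_set :: "nat \<Rightarrow> (nat \<Rightarrow> real) set" where
  "A_set n = {\<alpha>. psd_mat n (\<lambda>i j. diag_mat \<alpha> i j - ones_mat i j)}"

end

theory Submission
  imports Defs
begin

text \<open>
  Forward inequality: test both sides against a vector \<open>y\<close> and put \<open>w\<^sub>i = M\<^sub>i\<^sup>\<dagger> y\<close>. The two
  quadratic forms become \<open>q(w\<^sub>1 + \<dots> + w\<^sub>n)\<close> and \<open>\<Sum>\<^sub>i \<alpha>\<^sub>i q(w\<^sub>i)\<close> with \<open>q(w) = \<langle>w, \<rho> w\<rangle>\<close>.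
  As \<open>\<surd>q\<close> is a seminorm, \<open>q(\<Sum>\<^sub>i w\<^sub>i) \<le> (\<Sum>\<^sub>i \<surd>q(w\<^sub>i))\<^sup>2\<close>, and \<open>diag(\<alpha>) \<ge> J\<close> says precisely
  that \<open>(\<Sum>\<^sub>i s\<^sub>i)\<^sup>2 \<le> \<Sum>\<^sub>i \<alpha>\<^sub>i s\<^sub>i\<^sup>2\<close>. Adjoints exist by the Riesz representation theorem, obtained
  from the point of minimal norm on the closed hyperplane \<open>{g = 1}\<close>.

  Converse: unit vectors \<open>e\<^sub>i\<close> in the ranges of the \<open>P\<^sub>i\<close> are orthonormal. Testing the hypothesis
  with the rank-one state \<open>\<rho> = |v\<rangle>\<langle>v|\<close>, \<open>v = \<Sum>\<^sub>i e\<^sub>i\<close>, on \<open>y = \<Sum>\<^sub>i x\<^sub>i e\<^sub>i\<close> gives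
  \<open>|\<Sum>\<^sub>i x\<^sub>i|\<^sup>2 \<le> \<Sum>\<^sub>i \<alpha>\<^sub>i |x\<^sub>i|\<^sup>2\<close> for every \<open>x\<close>, i.e. \<open>diag(\<alpha>) \<ge> J\<close>.
\<close>

interpretation scaleC_right: additive "(\<lambda>x. a *\<^sub>C x :: 'a::complex_vector)"
  by standard (rule scaleC_add_right)

interpretation cinner_left: additive "(\<lambda>x. cinner x y :: complex)" for y :: "'a::complex_inner"
  by standard (rule cinner_add_left)

lemma cinner_add_right: "cinner x (y + z) = cinner x y + cinner (x::'a::complex_inner) z"
  by (metis cinner_add_left cinner_commute complex_cnj_add)

interpretation cinner_right: additive "cinner x" for x :: "'a::complex_inner"
  by standard (rule cinner_add_right)

lemma cinner_scaleC_right: "cinner x (r *\<^sub>C y) = r * cinner (x::'a::complex_inner) y"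
  by (metis cinner_commute cinner_scaleC_left complex_cnj_cnj complex_cnj_mult)

lemma cinner_scaleR_left: "cinner (r *\<^sub>R x) y = of_real r * cinner (x::'a::complex_inner) y"
  by (simp add: scaleR_scaleC cinner_scaleC_left)

lemma cinner_scaleR_right: "cinner x (r *\<^sub>R y) = of_real r * cinner (x::'a::complex_inner) y"
  by (simp add: scaleR_scaleC cinner_scaleC_right)

lemma Re_cinner_commute: "Re (cinner y x) = Re (cinner (x::'a::complex_inner) y)"
  by (metis cinner_commute cnj.simps(1))

lemma cinner_self_eq_norm_sq: "cinner x x = of_real ((norm (x::'a::complex_inner))\<^sup>2)"
  using norm_eq_sqrt_cinner[of x] cinner_self_real_nonneg[of x] by (simp add: complex_eq_iff)

lemma norm_sq_eq_Re_cinner: "(norm (x::'a::complex_inner))\<^sup>2 = Re (cinner x x)"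
  by (simp add: cinner_self_eq_norm_sq)

lemma cinner_eq_right_imp_eq:
  assumes "\<And>x. cinner x y = cinner x (z::'a::complex_inner)"
  shows "y = z"
proof -
  have "cinner (y - z) (y - z) = 0"
    using assms[of "y - z"] by (simp add: cinner_right.diff)
  then show ?thesis by (simp add: cinner_eq_zero_iff)
qed

lemma norm_scaleC: "norm (c *\<^sub>C x) = cmod c * norm (x::'a::complex_inner)"
proof -
  have "cinner (c *\<^sub>C x) (c *\<^sub>C x) = cnj c * c * cinner x x"
    by (simp add: cinner_scaleC_left cinner_scaleC_right mult.assoc)
  also have "\<dots> = of_real ((cmod c * norm x)\<^sup>2)"
    by (metis cinner_self_eq_norm_sq complex_norm_square mult.commute of_real_mult power_mult_distrib)
  finally show ?thesis
    by (simp add: cinner_self_eq_norm_sq del: of_real_power)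
qed

lemma clinear_add: "clinear f \<Longrightarrow> f (x + y) = f x + f y"
  by (simp add: clinear_def)

lemma clinear_scaleC: "clinear f \<Longrightarrow> f (c *\<^sub>C x) = c *\<^sub>C f x"
  by (simp add: clinear_def)

lemma clinear_scaleR: "clinear f \<Longrightarrow> f (r *\<^sub>R x) = r *\<^sub>R f x"
  by (simp add: clinear_def scaleR_scaleC)

lemma clinear_additive: "clinear f \<Longrightarrow> Modules.additive f"
  by (simp add: Modules.additive_def clinear_def)

lemma bounded_clinear_iff: "bounded_clinear f \<longleftrightarrow> clinear f \<and> bounded_linear f"
proof
  assume "bounded_clinear f"
  then obtain K where "clinear f" "\<And>x. norm (f x) \<le> norm x * K"
    unfolding bounded_clinear_def by blast
  then show "clinear f \<and> bounded_linear f"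
    by (blast intro: bounded_linear_intro clinear_add clinear_scaleR)
next
  assume "clinear f \<and> bounded_linear f"
  then show "bounded_clinear f"
    unfolding bounded_clinear_def using bounded_linear.bounded by blast
qed

lemma bounded_clinear_sum:
  assumes "\<And>i. i \<in> I \<Longrightarrow> bounded_clinear (f i)"
  shows "bounded_clinear (\<lambda>x. \<Sum>i\<in>I. f i x)"
proof -
  have lin: "clinear (f i)" "bounded_linear (f i)" if "i \<in> I" for i
    using assms[OF that] by (simp_all add: bounded_clinear_iff)
  have "clinear (\<lambda>x. \<Sum>i\<in>I. f i x)"
    unfolding clinear_def
  proof (intro conjI allI)
    show "(\<Sum>i\<in>I. f i (x + y)) = (\<Sum>i\<in>I. f i x) + (\<Sum>i\<in>I. f i y)" for x y
      using lin by (simp add: clinear_add sum.distrib)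
    show "(\<Sum>i\<in>I. f i (c *\<^sub>C x)) = c *\<^sub>C (\<Sum>i\<in>I. f i x)" for c x
      using lin by (simp add: clinear_scaleC scaleC_right.sum)
  qed
  then show ?thesis
    using lin by (simp add: bounded_clinear_iff bounded_linear_sum)
qed

section \<open>Cauchy--Schwarz inequalities\<close>

lemma quadratic_nonneg_discriminant:
  fixes a b c :: real
  assumes nonneg: "\<And>t. 0 \<le> a + b * t + c * t\<^sup>2" and "0 \<le> a" "0 \<le> c"
  shows "b\<^sup>2 \<le> 4 * a * c"
proof (cases "c = 0")
  case True
  have "b = 0"
  proof (rule ccontr)
    assume "b \<noteq> 0"
    have "0 \<le> a + b * (- (a + 1) / b) + c * (- (a + 1) / b)\<^sup>2" by (rule nonneg)
    with True \<open>b \<noteq> 0\<close> show False by (simp add: field_simps)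
  qed
  then show ?thesis using True by simp
next
  case False
  then have "c > 0" using assms by simp
  have "0 \<le> a + b * (- b / (2 * c)) + c * (- b / (2 * c))\<^sup>2" by (rule nonneg)
  also have "\<dots> = a - b\<^sup>2 / (4 * c)" using \<open>c > 0\<close> by (simp add: field_simps power2_eq_square)
  finally show ?thesis using \<open>c > 0\<close> by (simp add: field_simps)
qed

lemma pos_op_cauchy_schwarz:
  assumes "clinear \<rho>" "pos_op \<rho>"
  shows "(Re (cinner a (\<rho> b)) + Re (cinner b (\<rho> a)))\<^sup>2
           \<le> 4 * Re (cinner a (\<rho> a)) * Re (cinner b (\<rho> b))"
proof -
  define q where "q x = Re (cinner x (\<rho> x))" for x
  have q_nonneg: "0 \<le> q x" for x
    using \<open>pos_op \<rho>\<close> by (simp add: q_def pos_op_def)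
  have "q (a + t *\<^sub>R b) = q a + (Re (cinner a (\<rho> b)) + Re (cinner b (\<rho> a))) * t + q b * t\<^sup>2" for t
    using \<open>clinear \<rho>\<close>
    by (simp add: q_def clinear_add clinear_scaleR cinner_add_left cinner_add_right
        cinner_scaleR_left cinner_scaleR_right power2_eq_square algebra_simps)
  then show ?thesis
    using quadratic_nonneg_discriminant q_nonneg unfolding q_def by metis
qed

lemma pos_op_sqrt_triangle:
  assumes "clinear \<rho>" "pos_op \<rho>"
  shows "sqrt (Re (cinner (a + b) (\<rho> (a + b))))
           \<le> sqrt (Re (cinner a (\<rho> a))) + sqrt (Re (cinner b (\<rho> b)))"
proof -
  define qa qb s where "qa = Re (cinner a (\<rho> a))" and "qb = Re (cinner b (\<rho> b))"
    and "s = Re (cinner a (\<rho> b)) + Re (cinner b (\<rho> a))"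
  have "0 \<le> qa" "0 \<le> qb" using \<open>pos_op \<rho>\<close> by (simp_all add: qa_def qb_def pos_op_def)
  have "s \<le> sqrt (s\<^sup>2)" by simp
  also have "\<dots> \<le> sqrt (4 * qa * qb)"
    using pos_op_cauchy_schwarz[OF assms] unfolding qa_def qb_def s_def by (rule real_sqrt_le_mono)
  also have "\<dots> = 2 * sqrt qa * sqrt qb"
    using \<open>0 \<le> qa\<close> \<open>0 \<le> qb\<close> by (simp add: real_sqrt_mult)
  finally have "qa + s + qb \<le> (sqrt qa + sqrt qb)\<^sup>2"
    using \<open>0 \<le> qa\<close> \<open>0 \<le> qb\<close> by (simp add: power2_eq_square algebra_simps)
  moreover have "Re (cinner (a + b) (\<rho> (a + b))) = qa + s + qb"
    using \<open>clinear \<rho>\<close> by (simp add: qa_def qb_def s_def clinear_add cinner_add_left cinner_add_right)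
  ultimately have "sqrt (Re (cinner (a + b) (\<rho> (a + b)))) \<le> sqrt qa + sqrt qb"
    using \<open>0 \<le> qa\<close> \<open>0 \<le> qb\<close> by (simp add: real_le_lsqrt)
  then show ?thesis by (simp only: qa_def qb_def)
qed

lemma pos_op_sqrt_sum_le:
  assumes "clinear \<rho>" "pos_op \<rho>"
  shows "sqrt (Re (cinner (\<Sum>i\<in>I. w i) (\<rho> (\<Sum>i\<in>I. w i)))) \<le> (\<Sum>i\<in>I. sqrt (Re (cinner (w i) (\<rho> (w i)))))"
proof (induction I rule: infinite_finite_induct)
  case (insert i I)
  then show ?case
    using pos_op_sqrt_triangle[OF assms, of "w i" "\<Sum>i\<in>I. w i"] by simp
qed (simp_all add: additive.zero[OF clinear_additive[OF assms(1)]] cinner_left.zero)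

lemma Re_cinner_le: "\<bar>Re (cinner x y)\<bar> \<le> norm x * norm (y::'a::complex_inner)"
proof -
  have "clinear (\<lambda>x::'a. x)" "pos_op (\<lambda>x::'a. x)"
    by (simp_all add: clinear_def pos_op_def cinner_self_real_nonneg)
  moreover have "Re (cinner y x) = Re (cinner x y)" by (rule Re_cinner_commute)
  ultimately have "(2 * Re (cinner x y))\<^sup>2 \<le> 4 * (norm x)\<^sup>2 * (norm y)\<^sup>2"
    using pos_op_cauchy_schwarz[of "\<lambda>x. x" x y] by (simp add: norm_sq_eq_Re_cinner)
  then have "(Re (cinner x y))\<^sup>2 \<le> (norm x * norm y)\<^sup>2"
    by (simp add: power_mult_distrib)
  then have "\<bar>Re (cinner x y)\<bar> \<le> \<bar>norm x * norm y\<bar>"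
    by (simp only: abs_le_square_iff)
  then show ?thesis by simp
qed

lemma cmod_cinner_le: "cmod (cinner x y) \<le> norm x * norm (y::'a::complex_inner)"
proof (cases "cinner x y = 0")
  case False
  define c where "c = cinner x y / of_real (cmod (cinner x y))"
  have "cmod c = 1" using False by (simp add: c_def norm_divide)
  have "cinner (c *\<^sub>C x) y = of_real (cmod (cinner x y))"
    using False
    by (simp add: c_def cinner_scaleC_left complex_norm_square[symmetric] mult.commute power2_eq_square)
  then have "cmod (cinner x y) = Re (cinner (c *\<^sub>C x) y)" by simp
  also have "\<dots> \<le> norm (c *\<^sub>C x) * norm y" using Re_cinner_le by (rule abs_le_D1)
  finally show ?thesis by (simp add: norm_scaleC \<open>cmod c = 1\<close>)
qed simp

lemma bounded_linear_cinner_right: "bounded_linear (cinner (x::'a::complex_inner))"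
proof (rule bounded_linear_intro[where K = "norm x"])
  show "cmod (cinner x y) \<le> norm y * norm x" for y
    using cmod_cinner_le[of x y] by (simp only: mult.commute)
  show "cinner x (r *\<^sub>R y) = r *\<^sub>R cinner x y" for r y
    by (simp add: cinner_scaleR_right scaleR_conv_of_real)
qed (rule cinner_add_right)

section \<open>Riesz representation and adjoints\<close>

lemma parallelogram_law:
  "(norm (x - y))\<^sup>2 + (norm (x + y))\<^sup>2 = 2 * (norm x)\<^sup>2 + 2 * (norm (y::'a::complex_inner))\<^sup>2"
  by (simp add: norm_sq_eq_Re_cinner cinner_left.diff cinner_right.diff cinner_add_left cinner_add_right)

lemma midpoint_convex_minimizing_Cauchy:
  fixes H :: "'a::complex_inner set"
  assumes midpoint: "\<And>x y. x \<in> H \<Longrightarrow> y \<in> H \<Longrightarrow> (1/2) *\<^sub>R (x + y) \<in> H"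
    and d_le: "\<And>h. h \<in> H \<Longrightarrow> d \<le> (norm h)\<^sup>2"
    and hs_in: "\<And>k. hs k \<in> H" and hs_lt: "\<And>k. (norm (hs k))\<^sup>2 < d + inverse (real (Suc k))"
  shows "Cauchy hs"
proof (rule CauchyI)
  have dist_sq: "(norm (h - h'))\<^sup>2 \<le> 2 * (norm h)\<^sup>2 + 2 * (norm h')\<^sup>2 - 4 * d"
    if "h \<in> H" "h' \<in> H" for h h'
  proof -
    have "4 * d \<le> 4 * (norm ((1/2) *\<^sub>R (h + h')))\<^sup>2" using d_le[OF midpoint[OF that]] by simp
    also have "\<dots> = (norm (h + h'))\<^sup>2" by (simp add: power2_eq_square)
    finally show ?thesis using parallelogram_law[of h h'] by linarith
  qed
  fix r :: real assume "0 < r"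
  then obtain N where N: "inverse (real (Suc N)) < r\<^sup>2 / 4"
    using reals_Archimedean by (metis divide_pos_pos zero_less_numeral zero_less_power)
  have "norm (hs m - hs n) < r" if "N \<le> m" "N \<le> n" for m n
  proof -
    have "inverse (real (Suc m)) \<le> inverse (real (Suc N))" "inverse (real (Suc n)) \<le> inverse (real (Suc N))"
      using that by (simp_all add: le_imp_inverse_le)
    then have "(norm (hs m - hs n))\<^sup>2 < r\<^sup>2"
      using dist_sq[OF hs_in hs_in, of m n] hs_lt[of m] hs_lt[of n] N by linarith
    then show ?thesis using \<open>0 < r\<close> by (simp add: power_less_imp_less_base)
  qed
  then show "\<exists>M. \<forall>m\<ge>M. \<forall>n\<ge>M. norm (hs m - hs n) < r" by blast
qed

lemma closed_midpoint_convex_has_min_norm: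
  fixes H :: "'a::chilbert_space set"
  assumes "H \<noteq> {}" "closed H" and midpoint: "\<And>x y. x \<in> H \<Longrightarrow> y \<in> H \<Longrightarrow> (1/2) *\<^sub>R (x + y) \<in> H"
  shows "\<exists>z\<in>H. \<forall>h\<in>H. norm z \<le> norm h"
proof -
  define d where "d = Inf ((\<lambda>h. (norm h)\<^sup>2) ` H)"
  have bdd: "bdd_below ((\<lambda>h. (norm h)\<^sup>2) ` H)" by (rule bdd_belowI[of _ 0]) auto
  have d_le: "d \<le> (norm h)\<^sup>2" if "h \<in> H" for h
    unfolding d_def using bdd that by (simp add: cInf_lower)
  have "\<exists>h\<in>H. (norm h)\<^sup>2 < d + inverse (real (Suc k))" for k
  proof -
    have "Inf ((\<lambda>h. (norm h)\<^sup>2) ` H) < d + inverse (real (Suc k))" by (simp add: d_def)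
    then show ?thesis using \<open>H \<noteq> {}\<close> bdd by (simp add: cInf_less_iff)
  qed
  then obtain hs where hs_in: "\<And>k. hs k \<in> H"
    and hs_lt: "\<And>k. (norm (hs k))\<^sup>2 < d + inverse (real (Suc k))"
    by metis
  have "Cauchy hs" using midpoint d_le hs_in hs_lt by (rule midpoint_convex_minimizing_Cauchy)
  then obtain z where lim: "hs \<longlonglongrightarrow> z" using Cauchy_convergent_iff convergent_def by blast
  have "z \<in> H" using \<open>closed H\<close> hs_in lim by (rule closed_sequentially)
  have "(norm z)\<^sup>2 \<le> d"
  proof (rule LIMSEQ_le)
    show "(\<lambda>k. (norm (hs k))\<^sup>2) \<longlonglongrightarrow> (norm z)\<^sup>2" by (intro tendsto_intros lim)
    show "(\<lambda>k. d + inverse (real (Suc k))) \<longlonglongrightarrow> d"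
      using tendsto_add[OF tendsto_const LIMSEQ_inverse_real_of_nat, of d] by simp
  qed (use hs_lt less_imp_le in blast)
  then have "\<forall>h\<in>H. norm z \<le> norm h" using d_le by (meson norm_ge_zero order_trans power2_le_imp_le)
  with \<open>z \<in> H\<close> show ?thesis by blast
qed

lemma Re_cinner_eq_0_if_norm_min:
  assumes "\<And>t::real. norm z \<le> norm (z + t *\<^sub>R k)"
  shows "Re (cinner z k) = 0"
proof -
  have "Re (cinner k z) = Re (cinner z k)" by (rule Re_cinner_commute)
  then have "Re (cinner (z + t *\<^sub>R k) (z + t *\<^sub>R k))
      = Re (cinner z z) + 2 * Re (cinner z k) * t + Re (cinner k k) * t\<^sup>2" for t
    by (simp add: cinner_add_left cinner_add_right cinner_scaleR_left cinner_scaleR_right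
        power2_eq_square algebra_simps)
  moreover have "(norm z)\<^sup>2 \<le> (norm (z + t *\<^sub>R k))\<^sup>2" for t
    using assms by (simp add: power_mono)
  ultimately have "0 \<le> 0 + (2 * Re (cinner z k)) * t + (norm k)\<^sup>2 * t\<^sup>2" for t
    by (simp add: norm_sq_eq_Re_cinner)
  from quadratic_nonneg_discriminant[OF this] show ?thesis by simp
qed

lemma riesz_representation:
  fixes g :: "'a::chilbert_space \<Rightarrow> complex"
  assumes g: "bounded_linear g" and hom: "\<And>c x. g (c *\<^sub>C x) = c * g x"
  shows "\<exists>z. \<forall>x. g x = cinner z x"
proof (cases "\<forall>x. g x = 0")
  case True
  then show ?thesis by (metis cinner_left.zero)
next
  case False
  then obtain x1 where "g x1 \<noteq> 0" by blast
  have lin: "linear g" using g by (rule bounded_linear.linear)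
  define H where "H = {x. g x = 1}"
  have "(1 / g x1) *\<^sub>C x1 \<in> H" using \<open>g x1 \<noteq> 0\<close> by (simp add: H_def hom)
  moreover have "closed H"
    unfolding H_def using g by (intro closed_Collect_eq linear_continuous_on continuous_on_const)
  moreover have "(1/2) *\<^sub>R (x + y) \<in> H" if "x \<in> H" "y \<in> H" for x y
    using that by (simp add: H_def linear_add[OF lin] linear_scale[OF lin] scaleR_conv_of_real)
  ultimately obtain z where "z \<in> H" and z_min: "\<And>h. h \<in> H \<Longrightarrow> norm z \<le> norm h"
    using closed_midpoint_convex_has_min_norm[of H] by blast
  have z_orth: "cinner z k = 0" if "g k = 0" for k
  proof -
    have Re_0: "Re (cinner z k') = 0" if "g k' = 0" for k'
      using \<open>z \<in> H\<close> that
      by (intro Re_cinner_eq_0_if_norm_min z_min)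
        (simp add: H_def linear_add[OF lin] linear_scale[OF lin])
    have "Re (cinner z (\<i> *\<^sub>C k)) = 0" using that by (intro Re_0) (simp add: hom)
    then show ?thesis using Re_0[OF that] by (simp add: cinner_scaleC_right complex_eq_iff)
  qed
  have z_repr: "cinner z x = g x * of_real ((norm z)\<^sup>2)" for x
  proof -
    have "g (x - g x *\<^sub>C z) = 0" using \<open>z \<in> H\<close> by (simp add: H_def linear_diff[OF lin] hom)
    then have "cinner z (x - g x *\<^sub>C z) = 0" by (rule z_orth)
    then show ?thesis by (simp add: cinner_right.diff cinner_scaleC_right cinner_self_eq_norm_sq)
  qed
  have "z \<noteq> 0" using \<open>z \<in> H\<close> by (auto simp: H_def linear_0[OF lin])
  with z_repr show ?thesis
    by (intro exI[of _ "(1 / (norm z)\<^sup>2) *\<^sub>R z"]) (simp add: cinner_scaleR_left)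
qed

lemma adj_cinner:
  fixes M :: "'a::chilbert_space \<Rightarrow> 'b::complex_inner"
  assumes "bounded_clinear M"
  shows "cinner (M x) y = cinner x (adj M y)"
proof -
  have "\<exists>z. \<forall>x. cinner y (M x) = cinner z x" for y
  proof (rule riesz_representation)
    show "bounded_linear (\<lambda>x. cinner y (M x))"
      using assms
      by (intro bounded_linear_compose[OF bounded_linear_cinner_right]) (simp add: bounded_clinear_iff)
    show "cinner y (M (c *\<^sub>C x)) = c * cinner y (M x)" for c x
      using assms by (simp add: bounded_clinear_def clinear_scaleC cinner_scaleC_right)
  qed
  then obtain N where "\<And>y x. cinner y (M x) = cinner (N y) x" by metis
  then have "\<exists>N. \<forall>x y. cinner (M x) y = cinner x (N y)" by (metis cinner_commute)
  from someI_ex[OF this] show ?thesis unfolding adj_def by blast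
qed

lemma adj_sum:
  assumes "\<And>i. i \<in> I \<Longrightarrow> bounded_clinear (M i)"
  shows "adj (\<lambda>x. \<Sum>i\<in>I. M i x) y = (\<Sum>i\<in>I. adj (M i :: 'a::chilbert_space \<Rightarrow> 'b::complex_inner) y)"
proof (rule cinner_eq_right_imp_eq)
  fix x
  have "bounded_clinear (\<lambda>x. \<Sum>i\<in>I. M i x)" by (rule bounded_clinear_sum) (rule assms)
  then have "cinner x (adj (\<lambda>x. \<Sum>i\<in>I. M i x) y) = cinner (\<Sum>i\<in>I. M i x) y"
    by (rule adj_cinner[symmetric])
  also have "\<dots> = cinner x (\<Sum>i\<in>I. adj (M i) y)"
    using assms by (simp add: cinner_left.sum cinner_right.sum adj_cinner)
  finally show "cinner x (adj (\<lambda>x. \<Sum>i\<in>I. M i x) y) = cinner x (\<Sum>i\<in>I. adj (M i) y)" .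
qed

lemma cinner_sandwich:
  fixes M :: "'a::chilbert_space \<Rightarrow> 'b::complex_inner"
  assumes "bounded_clinear M"
  shows "cinner y (sandwich M \<rho> y) = cinner (adj M y) (\<rho> (adj M y))"
  unfolding sandwich_def comp_def
  by (metis adj_cinner[OF assms] cinner_commute)

section \<open>The forward inequality\<close>

lemma A_set_iff:
  "\<alpha> \<in> A_set n \<longleftrightarrow>
     (\<forall>x::nat \<Rightarrow> complex. (cmod (\<Sum>i=1..n. x i))\<^sup>2 \<le> (\<Sum>i=1..n. \<alpha> i * (cmod (x i))\<^sup>2))"
proof -
  have form: "(\<Sum>i=1..n. \<Sum>j=1..n. cnj (x i) * (diag_mat \<alpha> i j - ones_mat i j) * x j)
      = of_real ((\<Sum>i=1..n. \<alpha> i * (cmod (x i))\<^sup>2) - (cmod (\<Sum>i=1..n. x i))\<^sup>2)" for x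
  proof -
    have "cnj (x i) * (diag_mat \<alpha> i j - ones_mat i j) * x j
        = (if j = i then of_real (\<alpha> i) * (x i * cnj (x i)) else 0) - cnj (x i) * x j" for i j
      by (simp add: diag_mat_def ones_mat_def algebra_simps)
    then have "(\<Sum>j=1..n. cnj (x i) * (diag_mat \<alpha> i j - ones_mat i j) * x j)
        = of_real (\<alpha> i) * (x i * cnj (x i)) - (\<Sum>j=1..n. cnj (x i) * x j)" if "i \<in> {1..n}" for i
      using that by (simp add: sum_subtractf)
    then have "(\<Sum>i=1..n. \<Sum>j=1..n. cnj (x i) * (diag_mat \<alpha> i j - ones_mat i j) * x j)
        = (\<Sum>i=1..n. of_real (\<alpha> i) * (x i * cnj (x i))) - (\<Sum>i=1..n. \<Sum>j=1..n. cnj (x i) * x j)"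
      by (simp add: sum_subtractf)
    also have "(\<Sum>i=1..n. \<Sum>j=1..n. cnj (x i) * x j) = cnj (\<Sum>i=1..n. x i) * (\<Sum>i=1..n. x i)"
      by (simp add: sum_product)
    also have "\<dots> = of_real ((cmod (\<Sum>i=1..n. x i))\<^sup>2)"
      by (metis complex_norm_square mult.commute)
    also have "(\<Sum>i=1..n. of_real (\<alpha> i) * (x i * cnj (x i))) = of_real (\<Sum>i=1..n. \<alpha> i * (cmod (x i))\<^sup>2)"
      by (simp add: complex_norm_square[symmetric] del: of_real_power)
    finally show ?thesis by simp
  qed
  show ?thesis
    unfolding A_set_def psd_mat_def mem_Collect_eq form by simp
qed

theorem loewner_le_sandwich_sum:
  fixes M :: "nat \<Rightarrow> 'a::chilbert_space \<Rightarrow> 'b::chilbert_space"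
  assumes \<alpha>: "\<alpha> \<in> A_set n" and M: "\<forall>i\<in>{1..n}. bounded_clinear (M i)"
    and \<rho>: "pos_trace_class \<rho>"
  shows "loewner_le (sandwich (\<lambda>x. \<Sum>i=1..n. M i x) \<rho>)
           (\<lambda>y. \<Sum>i=1..n. \<alpha> i *\<^sub>R sandwich (M i) \<rho> y)"
proof -
  have "clinear \<rho>" "pos_op \<rho>" using \<rho> by (simp_all add: pos_trace_class_def bounded_clinear_def)
  define q where "q x = Re (cinner x (\<rho> x))" for x
  have q_nonneg: "0 \<le> q x" and cinner_q: "cinner x (\<rho> x) = of_real (q x)" for x
    using \<open>pos_op \<rho>\<close> by (simp_all add: q_def pos_op_def complex_eq_iff)
  have expand: "cinner y ((\<Sum>i=1..n. \<alpha> i *\<^sub>R sandwich (M i) \<rho> y) - sandwich (\<lambda>x. \<Sum>i=1..n. M i x) \<rho> y)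
      = of_real ((\<Sum>i=1..n. \<alpha> i * q (adj (M i) y)) - q (\<Sum>i=1..n. adj (M i) y))" for y
  proof -
    have "bounded_clinear (\<lambda>x. \<Sum>i=1..n. M i x)" using M by (intro bounded_clinear_sum) blast
    moreover have "adj (\<lambda>x. \<Sum>i=1..n. M i x) y = (\<Sum>i=1..n. adj (M i) y)"
      using M by (intro adj_sum) blast
    ultimately have "cinner y (sandwich (\<lambda>x. \<Sum>i=1..n. M i x) \<rho> y) = of_real (q (\<Sum>i=1..n. adj (M i) y))"
      by (simp add: cinner_sandwich cinner_q)
    moreover have "cinner y (\<Sum>i=1..n. \<alpha> i *\<^sub>R sandwich (M i) \<rho> y)
        = of_real (\<Sum>i=1..n. \<alpha> i * q (adj (M i) y))"
      using M by (simp add: cinner_right.sum cinner_scaleR_right cinner_sandwich cinner_q)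
    ultimately show ?thesis by (simp add: cinner_right.diff)
  qed
  have sum_le: "q (\<Sum>i=1..n. w i) \<le> (\<Sum>i=1..n. \<alpha> i * q (w i))" for w
  proof -
    have "sqrt (q (\<Sum>i=1..n. w i)) \<le> (\<Sum>i=1..n. sqrt (q (w i)))"
      unfolding q_def using \<open>clinear \<rho>\<close> \<open>pos_op \<rho>\<close> by (rule pos_op_sqrt_sum_le)
    then have "q (\<Sum>i=1..n. w i) \<le> (\<Sum>i=1..n. sqrt (q (w i)))\<^sup>2"
      by (rule sqrt_le_D)
    also have "\<dots> \<le> (\<Sum>i=1..n. \<alpha> i * (sqrt (q (w i)))\<^sup>2)"
    proof -
      have "(cmod (\<Sum>i=1..n. of_real (sqrt (q (w i)))))\<^sup>2
          \<le> (\<Sum>i=1..n. \<alpha> i * (cmod (of_real (sqrt (q (w i))) :: complex))\<^sup>2)"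
        using \<alpha> unfolding A_set_iff by blast
      then show ?thesis by (simp only: of_real_sum[symmetric] norm_of_real power2_abs)
    qed
    finally show ?thesis using q_nonneg by simp
  qed
  show ?thesis
    unfolding loewner_le_def pos_op_def expand using sum_le by simp
qed

section \<open>Projective measurements and the converse\<close>

definition rank_one :: "'a::complex_inner \<Rightarrow> 'a \<Rightarrow> 'a" where
  "rank_one v x = cinner v x *\<^sub>C v"

lemma cinner_rank_one: "cinner x (rank_one v x) = of_real ((cmod (cinner v x))\<^sup>2)"
  by (metis rank_one_def cinner_scaleC_right cinner_commute complex_norm_square)

lemma orthonormal_subset_onb:
  fixes S :: "'a::complex_inner set"
  assumes "\<forall>e\<in>S. cinner e e = 1" "pairwise (\<lambda>e f. cinner e f = 0) S"
  shows "\<exists>E. is_onb E \<and> S \<subseteq> E"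
proof -
  define A where "A = {T. S \<subseteq> T \<and> (\<forall>e\<in>T. cinner e e = 1) \<and> pairwise (\<lambda>e f. cinner e f = 0) T}"
  have "\<exists>M\<in>A. \<forall>X\<in>A. M \<subseteq> X \<longrightarrow> X = M"
  proof (rule subset_Zorn_nonempty)
    show "A \<noteq> {}" using assms by (auto simp: A_def)
  next
    fix C assume "C \<noteq> {}" "subset.chain A C"
    then have "C \<in> chains A" by (simp add: chains_alt_def)
    then have "C \<subseteq> A" "chain_subset C" by (simp_all add: chains_def)
    then show "\<Union>C \<in> A"
      using \<open>C \<noteq> {}\<close> unfolding A_def by (auto intro!: pairwise_chain_Union)
  qed
  then obtain M where "M \<in> A" and max: "\<And>X. X \<in> A \<Longrightarrow> M \<subseteq> X \<Longrightarrow> X = M" by blast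
  have "x = 0" if orth: "\<forall>e\<in>M. cinner e x = 0" for x
  proof (rule ccontr)
    assume "x \<noteq> 0"
    define u where "u = (1 / norm x) *\<^sub>R x"
    have "cinner u u = 1" using \<open>x \<noteq> 0\<close> by (simp add: u_def cinner_self_eq_norm_sq)
    moreover have "cinner e u = 0" "cinner u e = 0" if "e \<in> M" for e
      using orth that cinner_commute[of u e] by (simp_all add: u_def cinner_scaleR_right)
    ultimately have "insert u M \<in> A"
      using \<open>M \<in> A\<close> unfolding A_def by (auto simp: pairwise_insert)
    then have "u \<in> M" using max by blast
    then show False using orth \<open>cinner u u = 1\<close> by (simp add: u_def cinner_scaleR_right)
  qed
  then have "is_onb M" using \<open>M \<in> A\<close> unfolding A_def is_onb_def pairwise_def by blast
  with \<open>M \<in> A\<close> show ?thesis unfolding A_def by blast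
qed

lemma pos_trace_class_rank_one: "pos_trace_class (rank_one (v::'a::chilbert_space))"
proof -
  have "clinear (rank_one v)"
    by (simp add: clinear_def rank_one_def cinner_add_right cinner_scaleC_right scaleC_add_left scaleC_scaleC)
  moreover have "norm (rank_one v x) \<le> norm x * (norm v * norm v)" for x
    using mult_right_mono[OF cmod_cinner_le[of v x] norm_ge_zero[of v]]
    by (simp add: rank_one_def norm_scaleC ac_simps)
  moreover have "pos_op (rank_one v)" by (simp add: pos_op_def cinner_rank_one)
  moreover obtain E where "is_onb E" "(\<lambda>e. Re (cinner e (rank_one v e))) summable_on E"
  proof (cases "v = 0")
    case True
    obtain E :: "'a set" where "is_onb E" using orthonormal_subset_onb[of "{}"] by auto
    with True show ?thesis
      using that by (simp add: rank_one_def scaleC_right.zero cinner_right.zero summable_on_0)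
  next
    case False
    define u where "u = (1 / norm v) *\<^sub>R v"
    have "cinner u u = 1" using False by (simp add: u_def cinner_self_eq_norm_sq)
    then obtain E where "is_onb E" "u \<in> E" using orthonormal_subset_onb[of "{u}"] by auto
    have "Re (cinner e (rank_one v e)) = 0" if "e \<in> E - {u}" for e
    proof -
      have "cinner u e = 0" using \<open>is_onb E\<close> \<open>u \<in> E\<close> that unfolding is_onb_def by auto
      then have "cinner v e = 0" using False by (simp add: u_def cinner_scaleR_left)
      then show ?thesis by (simp add: cinner_rank_one)
    qed
    then have "(\<lambda>e. Re (cinner e (rank_one v e))) summable_on E
        \<longleftrightarrow> (\<lambda>e. Re (cinner e (rank_one v e))) summable_on {u}"
      using \<open>u \<in> E\<close> by (intro summable_on_cong_neutral) auto
    then have "(\<lambda>e. Re (cinner e (rank_one v e))) summable_on E" by simp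
    with \<open>is_onb E\<close> show ?thesis by (rule that)
  qed
  ultimately show ?thesis unfolding pos_trace_class_def bounded_clinear_def by blast
qed

lemma proj_measurementD:
  assumes "proj_measurement n P" "i \<in> {1..n}"
  shows "bounded_clinear (P i)" "adj (P i) = P i" "cinner (P i x) y = cinner x (P i y)"
    "P i (P i x) = P i x"
proof -
  show "bounded_clinear (P i)" "adj (P i) = P i"
    using assms unfolding proj_measurement_def by blast+
  then show "cinner (P i x) y = cinner x (P i y)" by (metis adj_cinner)
  show "P i (P i x) = P i x"
    using assms unfolding proj_measurement_def by (metis comp_apply)
qed

lemma proj_measurement_sum: "proj_measurement n P \<Longrightarrow> (\<Sum>i=1..n. P i x) = x"
  unfolding proj_measurement_def by (metis id_apply)

lemma proj_measurement_norm_sq: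
  assumes "proj_measurement n P"
  shows "(norm x)\<^sup>2 = (\<Sum>i=1..n. (norm (P i x))\<^sup>2)"
proof -
  have "cinner x x = (\<Sum>i=1..n. cinner x (P i x))"
    by (metis proj_measurement_sum[OF assms] cinner_right.sum)
  also have "\<dots> = (\<Sum>i=1..n. cinner (P i x) (P i x))"
    using proj_measurementD[OF assms] by (intro sum.cong) simp_all
  finally show ?thesis by (simp add: norm_sq_eq_Re_cinner Re_sum)
qed

lemma proj_measurement_orthogonal:
  assumes "proj_measurement n P" "i \<in> {1..n}" "j \<in> {1..n}" "i \<noteq> j" "P i e = e"
  shows "P j e = 0"
proof -
  have "(norm (P i e))\<^sup>2 + (norm (P j e))\<^sup>2 = (\<Sum>k\<in>{i, j}. (norm (P k e))\<^sup>2)"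
    using \<open>i \<noteq> j\<close> by simp
  also have "\<dots> \<le> (\<Sum>k=1..n. (norm (P k e))\<^sup>2)"
    using assms(2,3) by (intro sum_mono2) auto
  also have "\<dots> = (norm e)\<^sup>2" by (rule proj_measurement_norm_sq[OF assms(1), symmetric])
  finally show ?thesis using \<open>P i e = e\<close> by simp
qed

lemma proj_measurement_frame:
  assumes "proj_measurement n P" "\<forall>i\<in>{1..n}. P i \<noteq> (\<lambda>_. 0)"
  obtains e where "\<And>i j. i \<in> {1..n} \<Longrightarrow> j \<in> {1..n} \<Longrightarrow> P j (e i) = (if i = j then e i else 0)"
    and "\<And>i. i \<in> {1..n} \<Longrightarrow> norm (e i) = 1"
proof -
  have "\<forall>i\<in>{1..n}. \<exists>u. P i u = u \<and> norm u = 1"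
  proof
    fix i assume "i \<in> {1..n}"
    have "P i \<noteq> (\<lambda>_. 0)" using assms(2) \<open>i \<in> {1..n}\<close> by blast
    then obtain x where "P i x \<noteq> 0" by (auto simp: fun_eq_iff)
    define u where "u = (1 / norm (P i x)) *\<^sub>R P i x"
    have "P i u = u"
      using proj_measurementD[OF assms(1) \<open>i \<in> {1..n}\<close>]
      by (simp add: u_def bounded_clinear_def clinear_scaleR)
    moreover have "norm u = 1" using \<open>P i x \<noteq> 0\<close> by (simp add: u_def)
    ultimately show "\<exists>u. P i u = u \<and> norm u = 1" by blast
  qed
  then obtain e where e: "\<And>i. i \<in> {1..n} \<Longrightarrow> P i (e i) = e i \<and> norm (e i) = 1"
    by (metis bchoice)
  show ?thesis
  proof (rule that)
    fix i j assume "i \<in> {1..n}" "j \<in> {1..n}"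
    show "P j (e i) = (if i = j then e i else 0)"
    proof (cases "i = j")
      case False
      then show ?thesis
        using proj_measurement_orthogonal[OF assms(1) \<open>i \<in> {1..n}\<close> \<open>j \<in> {1..n}\<close>]
          e[OF \<open>i \<in> {1..n}\<close>] by simp
    qed (use e \<open>i \<in> {1..n}\<close> in simp)
  qed (use e in simp)
qed

lemma proj_measurement_frame_coordinate:
  assumes P: "proj_measurement n P"
    and P_e: "\<And>i j. i \<in> {1..n} \<Longrightarrow> j \<in> {1..n} \<Longrightarrow> P j (e i) = (if i = j then e i else 0)"
    and norm_e: "\<And>i. i \<in> {1..n} \<Longrightarrow> norm (e i) = 1"
    and "i \<in> {1..n}"
  shows "cinner (\<Sum>k=1..n. e k) (P i (\<Sum>j=1..n. x j *\<^sub>C e j)) = x i"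
proof -
  have "clinear (P i)" using proj_measurementD(1)[OF P \<open>i \<in> {1..n}\<close>] by (simp add: bounded_clinear_def)
  then have P_sum: "P i (\<Sum>j=1..n. f j) = (\<Sum>j=1..n. P i (f j))" for f
    by (simp add: additive.sum[OF clinear_additive])
  have "P i (\<Sum>j=1..n. x j *\<^sub>C e j) = (\<Sum>j=1..n. if j = i then x i *\<^sub>C e i else 0)"
    unfolding P_sum using \<open>clinear (P i)\<close> \<open>i \<in> {1..n}\<close>
    by (intro sum.cong) (auto simp: P_e clinear_scaleC scaleC_right.zero)
  also have "\<dots> = x i *\<^sub>C e i" using \<open>i \<in> {1..n}\<close> by simp
  finally have P_y: "P i (\<Sum>j=1..n. x j *\<^sub>C e j) = x i *\<^sub>C e i" .
  have "P i (\<Sum>k=1..n. e k) = (\<Sum>k=1..n. P i (e k))" by (rule P_sum)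
  also have "\<dots> = e i" using \<open>i \<in> {1..n}\<close> by (simp add: P_e)
  finally have P_v: "P i (\<Sum>k=1..n. e k) = e i" .
  have "cinner (\<Sum>k=1..n. e k) (P i (\<Sum>j=1..n. x j *\<^sub>C e j))
      = cinner (\<Sum>k=1..n. e k) (P i (P i (\<Sum>j=1..n. x j *\<^sub>C e j)))"
    using proj_measurementD(4)[OF P \<open>i \<in> {1..n}\<close>] by simp
  also have "\<dots> = cinner (e i) (P i (\<Sum>j=1..n. x j *\<^sub>C e j))"
    using proj_measurementD(3)[OF P \<open>i \<in> {1..n}\<close>] P_v by metis
  also have "\<dots> = x i"
    using P_y norm_e[OF \<open>i \<in> {1..n}\<close>] by (simp add: cinner_scaleC_right cinner_self_eq_norm_sq)
  finally show ?thesis .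
qed

theorem A_set_if_proj_measurement_loewner_le:
  fixes P :: "nat \<Rightarrow> 'a::chilbert_space \<Rightarrow> 'a"
  assumes P: "proj_measurement n P" and nonzero: "\<forall>i\<in>{1..n}. P i \<noteq> (\<lambda>_. 0)"
    and le: "\<And>\<rho>. pos_trace_class \<rho> \<Longrightarrow> loewner_le \<rho> (\<lambda>y. \<Sum>i=1..n. \<alpha> i *\<^sub>R sandwich (P i) \<rho> y)"
  shows "\<alpha> \<in> A_set n"
  unfolding A_set_iff
proof
  fix x :: "nat \<Rightarrow> complex"
  obtain e where P_e: "\<And>i j. i \<in> {1..n} \<Longrightarrow> j \<in> {1..n} \<Longrightarrow> P j (e i) = (if i = j then e i else 0)"
    and norm_e: "\<And>i. i \<in> {1..n} \<Longrightarrow> norm (e i) = 1"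
    using proj_measurement_frame[OF P nonzero] by blast
  define v y where "v = (\<Sum>k=1..n. e k)" and "y = (\<Sum>j=1..n. x j *\<^sub>C e j)"
  have coord: "cinner v (P i y) = x i" if "i \<in> {1..n}" for i
    unfolding v_def y_def using P P_e norm_e that by (rule proj_measurement_frame_coordinate)
  have "cinner y (sandwich (P i) (rank_one v) y) = of_real ((cmod (x i))\<^sup>2)" if "i \<in> {1..n}" for i
    using proj_measurementD[OF P that] by (simp add: cinner_sandwich cinner_rank_one coord[OF that])
  then have "cinner y (\<Sum>i=1..n. \<alpha> i *\<^sub>R sandwich (P i) (rank_one v) y)
      = of_real (\<Sum>i=1..n. \<alpha> i * (cmod (x i))\<^sup>2)"
    by (simp add: cinner_right.sum cinner_scaleR_right)
  moreover have "cinner v y = (\<Sum>i=1..n. x i)"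
  proof -
    have "cinner v y = (\<Sum>i=1..n. cinner v (P i y))"
      by (metis proj_measurement_sum[OF P] cinner_right.sum)
    also have "\<dots> = (\<Sum>i=1..n. x i)" by (intro sum.cong refl coord)
    finally show ?thesis .
  qed
  moreover have "0 \<le> Re (cinner y ((\<Sum>i=1..n. \<alpha> i *\<^sub>R sandwich (P i) (rank_one v) y) - rank_one v y))"
    using le[OF pos_trace_class_rank_one] by (simp add: loewner_le_def pos_op_def)
  ultimately show "(cmod (\<Sum>i=1..n. x i))\<^sup>2 \<le> (\<Sum>i=1..n. \<alpha> i * (cmod (x i))\<^sup>2)"
    by (simp add: cinner_right.diff cinner_rank_one)
qed

theorem lemma1:
  shows "(\<forall>(n::nat) (\<alpha>::nat \<Rightarrow> real) (M::nat \<Rightarrow> 'a::chilbert_space \<Rightarrow> 'b::chilbert_space)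
            (\<rho>::'a \<Rightarrow> 'a).
            2 \<le> n \<and> \<alpha> \<in> A_set n \<and> (\<forall>i\<in>{1..n}. bounded_clinear (M i)) \<and> pos_trace_class \<rho>
            \<longrightarrow> loewner_le (sandwich (\<lambda>x. \<Sum>i=1..n. M i x) \<rho>)
                            (\<lambda>y. \<Sum>i=1..n. \<alpha> i *\<^sub>R sandwich (M i) \<rho> y))
       \<and> (\<forall>(n::nat) (\<alpha>::nat \<Rightarrow> real) (P::nat \<Rightarrow> 'a \<Rightarrow> 'a).
            2 \<le> n \<and> proj_measurement n P \<and> (\<forall>i\<in>{1..n}. P i \<noteq> (\<lambda>_. 0)) \<and>
            (\<forall>\<rho>. pos_trace_class \<rho> \<longrightarrow>
                 sandwich (\<lambda>x. \<Sum>i=1..n. P i x) \<rho> = \<rho> \<and>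
                 loewner_le \<rho> (\<lambda>y. \<Sum>i=1..n. \<alpha> i *\<^sub>R sandwich (P i) \<rho> y))
            \<longrightarrow> \<alpha> \<in> A_set n)"
proof (intro conjI allI impI)
  fix n :: nat and \<alpha> :: "nat \<Rightarrow> real" and M :: "nat \<Rightarrow> 'a \<Rightarrow> 'b" and \<rho> :: "'a \<Rightarrow> 'a"
  assume "2 \<le> n \<and> \<alpha> \<in> A_set n \<and> (\<forall>i\<in>{1..n}. bounded_clinear (M i)) \<and> pos_trace_class \<rho>"
  then show "loewner_le (sandwich (\<lambda>x. \<Sum>i=1..n. M i x) \<rho>)
      (\<lambda>y. \<Sum>i=1..n. \<alpha> i *\<^sub>R sandwich (M i) \<rho> y)"
    by (intro loewner_le_sandwich_sum) auto
next
  fix n :: nat and \<alpha> :: "nat \<Rightarrow> real" and P :: "nat \<Rightarrow> 'a \<Rightarrow> 'a"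
  assume "2 \<le> n \<and> proj_measurement n P \<and> (\<forall>i\<in>{1..n}. P i \<noteq> (\<lambda>_. 0)) \<and>
    (\<forall>\<rho>. pos_trace_class \<rho> \<longrightarrow> sandwich (\<lambda>x. \<Sum>i=1..n. P i x) \<rho> = \<rho> \<and>
       loewner_le \<rho> (\<lambda>y. \<Sum>i=1..n. \<alpha> i *\<^sub>R sandwich (P i) \<rho> y))"
  then show "\<alpha> \<in> A_set n"
    by (intro A_set_if_proj_measurement_loewner_le) auto
qed

end
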